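(* Consider the Int-GARCH(1,1,1) model: for integers $t$, $\lambda_t=h_t\epsilon_t$, $\delta_t=h_t\eta_t$, $$h_t=\mu+\alpha_1|\lambda_{t-1}|+\beta_1\delta_{t-1}+\gamma_1h_{t-1},$$ where $\mu>0$, $\alpha_1,\beta_1,\gamma_1>0$ are constants, $\{\epsilon_t\}$ are i.i.d. $N(0,1)$, $\{\eta_t\}$ are i.i.d. $\Gamma(k,1)$ (shape $k>0$, scale 1), the two sequences are mutually independent, and $(\epsilon_t,\eta_t)$ is independent of $\{h_s:s\le t\}$. Put $x_t=\alpha_1|\epsilon_t|+\beta_1\eta_t+\gamma_1$, $C_1=E(x_t)$, $C_2=E(x_t^2)$, and assume the process starts from its infinite past with finite variance and $C_2<C_1<1$. Then (i) $E(\eta_tx_t)=\alpha_1\sqrt{2/\pi}\,k+\beta_1(k+k^2)+\gamma_1k$; (ii) for every integer $s\ge 1$, $$E(h_th_{t+s}\eta_t)=\frac{\mu^2k}{C_1-1}\left(-\frac{C_1^s-1}{C_1-1}+\frac{C_1^s+C_1^{s-1}}{C_2-1}\left[\alpha_1\sqrt{2/\pi}+\beta_1(1+k)+\gamma_1\right]\right).$$ *)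

theory Defs
  imports "HOL-Probability.Probability"
begin

definition gamma_density :: "real \<Rightarrow> real \<Rightarrow> real" where
  "gamma_density k x = (if x > 0 then x powr (k - 1) * exp (- x) / Gamma k else 0)"

end

theory Submission
  imports Defs
begin

text \<open>
  Since \<open>\<eta>\<^sub>t \<ge> 0\<close>, the negative part of \<open>h\<^sub>t\<close> is dominated by that of \<open>h\<^sub>t\<^sub>-\<^sub>n\<close> times
  \<open>x\<^sub>t\<^sub>-\<^sub>1 \<cdots> x\<^sub>t\<^sub>-\<^sub>n\<close>, a product whose second moment is \<open>C\<^sub>2\<^sup>n \<rightarrow> 0\<close>; hence \<open>h\<^sub>t \<ge> 0\<close> almost
  surely and the recursion becomes \<open>h\<^sub>t = \<mu> + x\<^sub>t\<^sub>-\<^sub>1 h\<^sub>t\<^sub>-\<^sub>1\<close>. The same estimate shows that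
  iterating it converges: \<open>h\<^sub>t = \<mu> \<Sum>\<^sub>j x\<^sub>t\<^sub>-\<^sub>1 \<cdots> x\<^sub>t\<^sub>-\<^sub>j\<close> is a function of the noise strictly
  before \<open>t\<close>. The bounded sequences \<open>E h\<^sub>t\<close> and \<open>E h\<^sub>t\<^sup>2\<close> satisfy affine recurrences with
  ratios \<open>C\<^sub>1, C\<^sub>2 < 1\<close> and are therefore constant. For \<open>s \<ge> 1\<close> the variable
  \<open>h\<^sub>t h\<^sub>t\<^sub>+\<^sub>s \<eta>\<^sub>t\<close> only depends on the noise before \<open>t + s\<close>, so it is independent of
  \<open>x\<^sub>t\<^sub>+\<^sub>s\<close>, and \<open>a\<^sub>s = E(h\<^sub>t h\<^sub>t\<^sub>+\<^sub>s \<eta>\<^sub>t)\<close> satisfies \<open>a\<^sub>s\<^sub>+\<^sub>1 = \<mu> k E h + C\<^sub>1 a\<^sub>s\<close> with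
  \<open>a\<^sub>1 = \<mu> k E h + E(\<eta>\<^sub>t x\<^sub>t) E h\<^sub>t\<^sup>2\<close>.
\<close>

lemma mult_le_weighted_squares:
  fixes a b c :: real
  assumes "c > 0"
  shows "a * b \<le> (c * a\<^sup>2 + b\<^sup>2 / c) / 2"
proof -
  have "0 \<le> (c * a - b)\<^sup>2 / c" using assms by simp
  also have "\<dots> = c * a\<^sup>2 + b\<^sup>2 / c - 2 * (a * b)"
    using assms by (simp add: power2_eq_square field_simps)
  finally show ?thesis by simp
qed

lemma nonpos_if_le_geometric:
  fixes D K r :: real
  assumes "0 \<le> r" "r < 1" "\<And>n. D \<le> K * r ^ n"
  shows "D \<le> 0"
proof -
  have "(\<lambda>n. K * r ^ n) \<longlonglongrightarrow> K * 0"
    using assms by (intro tendsto_mult tendsto_const LIMSEQ_power_zero) auto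
  then show ?thesis
    using assms(3) by (intro LIMSEQ_le_const[of "\<lambda>n. K * r ^ n"]) auto
qed

lemma nonneg_series_remainder:
  fixes P r :: "nat \<Rightarrow> real"
  assumes P: "\<And>j. 0 \<le> P j" and c: "c > 0" and r: "\<And>n. 0 \<le> r n"
    and partial: "\<And>n. y = c * (\<Sum>j<n. P j) + r n"
  shows "summable P" and "0 \<le> c * suminf P" and "c * suminf P \<le> y" and "y - c * suminf P \<le> r n"
proof -
  have bounded: "(\<Sum>j<n. P j) \<le> y / c" for n
    using partial[of n] r[of n] c by (simp add: field_simps)
  show summable: "summable P"
    by (rule summableI_nonneg_bounded[OF P bounded])
  show "0 \<le> c * suminf P"
    using suminf_nonneg[OF summable P] c by simp
  show "c * suminf P \<le> y"
    using suminf_le_const[OF summable bounded] c by (simp add: field_simps)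
  have "c * (\<Sum>j<n. P j) \<le> c * suminf P"
    using sum_le_suminf[OF summable _ P, of "{..<n}"] c by simp
  then show "y - c * suminf P \<le> r n"
    using partial[of n] by linarith
qed

lemma bounded_solution_affine_recurrence:
  fixes a :: "int \<Rightarrow> real"
  assumes rec: "\<And>u. a u = c + q * a (u - 1)" and q: "0 \<le> q" "q < 1"
    and bounded: "\<And>u. \<bar>a u\<bar> \<le> K"
  shows "a u = c / (1 - q)"
proof -
  define L where "L = c / (1 - q)"
  have deviation_step: "a v - L = q * (a (v - 1) - L)" for v
    using rec[of v] q by (simp add: L_def field_simps)
  have deviation: "\<bar>a u - L\<bar> = q ^ n * \<bar>a (u - int n) - L\<bar>" for n
  proof (induction n)
    case (Suc n)
    have "a (u - int n) - L = q * (a (u - int (Suc n)) - L)"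
      using deviation_step[of "u - int n"] by (simp add: algebra_simps)
    then have "\<bar>a (u - int n) - L\<bar> = q * \<bar>a (u - int (Suc n)) - L\<bar>"
      using q by (simp add: abs_mult)
    then show ?case using Suc.IH by simp
  qed simp
  have "\<bar>a u - L\<bar> \<le> (K + \<bar>L\<bar>) * q ^ n" for n
  proof -
    have "\<bar>a (u - int n) - L\<bar> \<le> K + \<bar>L\<bar>" using bounded[of "u - int n"] by linarith
    then show ?thesis
      using deviation[of n] q by (simp add: mult_left_mono mult.commute)
  qed
  then have "\<bar>a u - L\<bar> \<le> 0" using q by (intro nonpos_if_le_geometric[where r = q]) auto
  then show ?thesis by (simp add: L_def)
qed

lemma gamma_density_nonneg: "k > 0 \<Longrightarrow> 0 \<le> gamma_density k x"
  by (simp add: gamma_density_def)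

lemma has_bochner_integral_gamma_moment:
  assumes "k > 0"
  shows "has_bochner_integral lborel (\<lambda>x. gamma_density k x * x ^ n) (Gamma (k + real n) / Gamma k)"
proof (rule has_bochner_integral_nn_integral)
  show "(\<lambda>x. gamma_density k x * x ^ n) \<in> borel_measurable lborel"
    unfolding gamma_density_def by measurable
  show "AE x in lborel. 0 \<le> gamma_density k x * x ^ n"
    using assms by (auto simp: gamma_density_def)
  show "0 \<le> Gamma (k + real n) / Gamma k"
    using assms by (simp add: less_imp_le)
  define f where "f x = indicator {0..} x * (x powr (k + real n - 1) / exp x)" for x :: real
  have density: "ennreal (gamma_density k x * x ^ n) = ennreal (f x) * ennreal (1 / Gamma k)" for x
  proof (cases "x > 0")
    case True
    have "x powr (k - 1) * x ^ n = x powr (k + real n - 1)"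
      using True by (simp add: powr_realpow[symmetric] powr_add[symmetric] algebra_simps)
    then have "gamma_density k x * x ^ n = f x * (1 / Gamma k)"
      using True by (simp add: f_def gamma_density_def exp_minus field_simps)
    then show ?thesis using True assms by (simp add: f_def ennreal_mult[symmetric])
  next
    case False
    then show ?thesis by (cases "x = 0") (auto simp: f_def gamma_density_def)
  qed
  have "(\<integral>\<^sup>+x. ennreal (f x) \<partial>lborel) = Gamma (k + real n)"
    using nn_integral_has_integral_lebesgue[OF _ Gamma_integral_real[of "k + real n"]] assms
    by (simp add: f_def)
  then show "(\<integral>\<^sup>+x. ennreal (gamma_density k x * x ^ n) \<partial>lborel) = ennreal (Gamma (k + real n) / Gamma k)"
    unfolding density using assms
    by (subst nn_integral_multc) (auto simp: f_def ennreal_mult[symmetric])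
qed

lemma distributed_has_bochner_integral:
  fixes f g :: "real \<Rightarrow> real"
  assumes "distributed M lborel X f" "\<And>x. 0 \<le> f x" "g \<in> borel_measurable borel"
    and "has_bochner_integral lborel (\<lambda>x. f x * g x) I"
  shows "integrable M (\<lambda>\<omega>. g (X \<omega>))" and "(\<integral>\<omega>. g (X \<omega>) \<partial>M) = I"
  using distributed_integrable[OF assms(1), of g] distributed_integral[OF assms(1), of g] assms(2-4)
  by (auto simp: has_bochner_integral_iff)

lemma distributed_AE_nonneg:
  fixes f :: "real \<Rightarrow> real"
  assumes "distributed M lborel X f" "\<And>x. x < 0 \<Longrightarrow> f x = 0"
  shows "AE \<omega> in M. 0 \<le> X \<omega>"
proof -
  have "(\<integral>\<^sup>+x. ennreal (f x) * indicator {..<0} x \<partial>lborel) = 0"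
    using assms(2) by (intro nn_integral_zero') (auto simp: indicator_def)
  then have "(\<integral>\<^sup>+\<omega>. indicator {..<0} (X \<omega>) \<partial>M) = 0"
    using distributed_nn_integral[OF assms(1), of "indicator {..<0}"] by simp
  then have "AE \<omega> in M. indicator {..<0::real} (X \<omega>) = (0::ennreal)"
    by (subst (asm) nn_integral_0_iff_AE) (use assms(1) in \<open>auto dest: distributed_measurable\<close>)
  then show ?thesis
    by eventually_elim (auto simp: indicator_def split: if_splits)
qed

lemma (in prob_space) indep_var_compose_vimage:
  assumes f: "f \<in> measurable M N1" and g: "g \<in> measurable M N2"
    and indep: "indep_set (sets (vimage_algebra (space M) f N1)) (sets (vimage_algebra (space M) g N2))"
    and F: "F \<in> measurable N1 K1" and G: "G \<in> measurable N2 K2"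
  shows "indep_var K1 (\<lambda>\<omega>. F (f \<omega>)) K2 (\<lambda>\<omega>. G (g \<omega>))"
proof -
  have "f \<in> space M \<rightarrow> space N1" "g \<in> space M \<rightarrow> space N2"
    using measurable_space[OF f] measurable_space[OF g] by auto
  then have Ff: "(\<lambda>\<omega>. F (f \<omega>)) \<in> measurable (vimage_algebra (space M) f N1) K1"
    and Gg: "(\<lambda>\<omega>. G (g \<omega>)) \<in> measurable (vimage_algebra (space M) g N2) K2"
    using measurable_compose[OF measurable_vimage_algebra1 F] measurable_compose[OF measurable_vimage_algebra1 G]
    by auto
  have "sets (vimage_algebra (space M) (\<lambda>\<omega>. F (f \<omega>)) K1) \<subseteq> sets (vimage_algebra (space M) f N1)"
    by (rule sets_image_in_sets[OF _ Ff]) simp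
  moreover have "sets (vimage_algebra (space M) (\<lambda>\<omega>. G (g \<omega>)) K2) \<subseteq> sets (vimage_algebra (space M) g N2)"
    by (rule sets_image_in_sets[OF _ Gg]) simp
  ultimately have "indep_set (sets (vimage_algebra (space M) (\<lambda>\<omega>. F (f \<omega>)) K1))
      (sets (vimage_algebra (space M) (\<lambda>\<omega>. G (g \<omega>)) K2))"
    using indep unfolding indep_set_def
    by (elim indep_sets_mono_sets) (auto split: bool.split)
  then show ?thesis
    using measurable_compose[OF f F] measurable_compose[OF g G]
    by (simp add: indep_var_eq sets_vimage_algebra)
qed

text \<open>
  The closed form of the theorem solves \<open>a\<^sub>s\<^sub>+\<^sub>1 = \<mu> k m + C\<^sub>1 a\<^sub>s\<close>, \<open>a\<^sub>1 = \<mu> k m + k A q\<close>,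
  where \<open>m = \<mu> / (1 - C\<^sub>1)\<close> and \<open>q = \<mu>\<^sup>2 (1 + C\<^sub>1) / ((1 - C\<^sub>1)(1 - C\<^sub>2))\<close> will be
  \<open>E h\<^sub>t\<close> and \<open>E h\<^sub>t\<^sup>2\<close>, and \<open>k A = E(\<eta>\<^sub>t x\<^sub>t)\<close>.
\<close>

definition cross_moment_formula :: "real \<Rightarrow> real \<Rightarrow> real \<Rightarrow> real \<Rightarrow> real \<Rightarrow> nat \<Rightarrow> real" where
  "cross_moment_formula \<mu> k C1 C2 A s =
     \<mu>\<^sup>2 * k / (C1 - 1) * (- (C1 ^ s - 1) / (C1 - 1) + (C1 ^ s + C1 ^ (s - 1)) / (C2 - 1) * A)"

lemma cross_moment_formula_1:
  assumes "C1 \<noteq> 1" "C2 \<noteq> 1"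
  shows "cross_moment_formula \<mu> k C1 C2 A 1
     = \<mu> * k * (\<mu> / (1 - C1)) + k * A * (\<mu>\<^sup>2 * (1 + C1) / ((1 - C1) * (1 - C2)))"
proof -
  have "inverse (C1 - 1) * (C1 - 1) = 1" "inverse (C2 - 1) * (C2 - 1) = 1"
    "inverse (1 - C1) = - inverse (C1 - 1)" "inverse (1 - C2) = - inverse (C2 - 1)"
    using assms by (auto simp: inverse_minus_eq[symmetric])
  then show ?thesis
    unfolding cross_moment_formula_def divide_inverse inverse_mult_distrib power_one_right
      diff_self_eq_0 power_0
    by algebra
qed

lemma cross_moment_formula_Suc:
  assumes "C1 \<noteq> 1" "C2 \<noteq> 1"
  shows "cross_moment_formula \<mu> k C1 C2 A (Suc (Suc n))
     = \<mu> * k * (\<mu> / (1 - C1)) + C1 * cross_moment_formula \<mu> k C1 C2 A (Suc n)"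
proof -
  have "inverse (C1 - 1) * (C1 - 1) = 1" "inverse (C2 - 1) * (C2 - 1) = 1"
    "inverse (1 - C1) = - inverse (C1 - 1)" "inverse (1 - C2) = - inverse (C2 - 1)"
    using assms by (auto simp: inverse_minus_eq[symmetric])
  then show ?thesis
    unfolding cross_moment_formula_def divide_inverse inverse_mult_distrib diff_Suc_1 power_Suc
    by algebra
qed

text \<open>The noise variables \<open>\<epsilon>\<^sub>t\<close> and \<open>\<eta>\<^sub>t\<close> are indexed by \<open>Inl t\<close> and \<open>Inr t\<close>.\<close>

definition at_times :: "int set \<Rightarrow> (int + int) set" where
  "at_times S = Inl ` S \<union> Inr ` S"

lemma at_times_disjoint: "S \<inter> T = {} \<Longrightarrow> at_times S \<inter> at_times T = {}"
  by (auto simp: at_times_def)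

lemma at_times_mono: "S \<subseteq> T \<Longrightarrow> at_times S \<subseteq> at_times T"
  by (auto simp: at_times_def)

locale int_garch = prob_space M
  for M :: "'a measure" +
  fixes h eps eta :: "int \<Rightarrow> 'a \<Rightarrow> real"
    and \<mu> \<alpha>1 \<beta>1 \<gamma>1 k C1 C2 :: real
  assumes \<mu>_pos: "\<mu> > 0" and \<alpha>1_pos: "\<alpha>1 > 0" and \<beta>1_pos: "\<beta>1 > 0" and \<gamma>1_pos: "\<gamma>1 > 0"
    and k_pos: "k > 0"
    and meas_h: "\<And>t. h t \<in> borel_measurable M"
    and rec: "\<And>t \<omega>. \<omega> \<in> space M \<Longrightarrow>
        h t \<omega> = \<mu> + \<alpha>1 * \<bar>h (t - 1) \<omega> * eps (t - 1) \<omega>\<bar>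
                 + \<beta>1 * (h (t - 1) \<omega> * eta (t - 1) \<omega>) + \<gamma>1 * h (t - 1) \<omega>"
    and eps_distr: "\<And>t. distributed M lborel (eps t) std_normal_density"
    and eta_distr: "\<And>t. distributed M lborel (eta t) (gamma_density k)"
    and indep_noise: "indep_vars (\<lambda>_. borel)
        (\<lambda>i. case i of Inl t \<Rightarrow> eps t | Inr t \<Rightarrow> eta t) UNIV"
    and indep_past: "\<And>t. indep_set
        (sets (vimage_algebra (space M) (\<lambda>\<omega>. (eps t \<omega>, eta t \<omega>)) (borel \<Otimes>\<^sub>M borel)))
        (sets (vimage_algebra (space M) (\<lambda>\<omega>. \<lambda>s\<in>{..t}. h s \<omega>) (PiM {..t} (\<lambda>_. borel))))"
    and finite_var: "\<And>t. integrable M (\<lambda>\<omega>. (h t \<omega>)\<^sup>2)"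
    and bounded_var: "\<exists>B. \<forall>t. expectation (\<lambda>\<omega>. (h t \<omega>)\<^sup>2) \<le> B"
    and C1_def: "\<And>t. expectation (\<lambda>\<omega>. \<alpha>1 * \<bar>eps t \<omega>\<bar> + \<beta>1 * eta t \<omega> + \<gamma>1) = C1"
    and C2_def: "\<And>t. expectation (\<lambda>\<omega>. (\<alpha>1 * \<bar>eps t \<omega>\<bar> + \<beta>1 * eta t \<omega> + \<gamma>1)\<^sup>2) = C2"
    and C2_less_C1: "C2 < C1" and C1_less_1: "C1 < 1"
begin

definition X :: "int \<Rightarrow> 'a \<Rightarrow> real" where
  "X t \<omega> = \<alpha>1 * \<bar>eps t \<omega>\<bar> + \<beta>1 * eta t \<omega> + \<gamma>1"

definition noise :: "'a \<Rightarrow> int + int \<Rightarrow> real" where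
  "noise \<omega> i = (case i of Inl t \<Rightarrow> eps t \<omega> | Inr t \<Rightarrow> eta t \<omega>)"

definition x_of :: "(int + int \<Rightarrow> real) \<Rightarrow> int \<Rightarrow> real" where
  "x_of z t = \<alpha>1 * \<bar>z (Inl t)\<bar> + \<beta>1 * z (Inr t) + \<gamma>1"

primrec xprod :: "(int + int \<Rightarrow> real) \<Rightarrow> int \<Rightarrow> nat \<Rightarrow> real" where
  "xprod z u 0 = 1"
| "xprod z u (Suc n) = x_of z (u - 1) * xprod z (u - 1) n"

definition h_series :: "(int + int \<Rightarrow> real) \<Rightarrow> int \<Rightarrow> real" where
  "h_series z u = \<mu> * (\<Sum>j. xprod z u j)"

lemma eps_measurable[measurable]: "eps t \<in> borel_measurable M"
  using distributed_measurable[OF eps_distr[of t]] by simp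

lemma eta_measurable[measurable]: "eta t \<in> borel_measurable M"
  using distributed_measurable[OF eta_distr[of t]] by simp

declare meas_h[measurable]

lemma X_measurable[measurable]: "X t \<in> borel_measurable M"
  unfolding X_def by measurable

lemma noise_measurable[measurable]: "(\<lambda>\<omega>. noise \<omega> i) \<in> borel_measurable M"
  by (cases i) (simp_all add: noise_def)

lemma restrict_noise_measurable[measurable]:
  "(\<lambda>\<omega>. restrict (noise \<omega>) A) \<in> measurable M (PiM A (\<lambda>_. borel))"
  by measurable

lemma X_eq_x_of: "X t \<omega> = x_of (noise \<omega>) t"
  by (simp add: X_def x_of_def noise_def)

lemma xprod_noise_measurable[measurable]: "(\<lambda>\<omega>. xprod (noise \<omega>) u n) \<in> borel_measurable M"
  by (induction n arbitrary: u) (simp_all flip: X_eq_x_of)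

lemma x_of_restrict: "at_times {t} \<subseteq> A \<Longrightarrow> x_of (restrict z A) t = x_of z t"
  by (simp add: x_of_def at_times_def)

lemma x_of_measurable:
  assumes "at_times {t} \<subseteq> A"
  shows "(\<lambda>z. x_of z t) \<in> borel_measurable (PiM A (\<lambda>_. borel))"
proof -
  have "Inl t \<in> A" "Inr t \<in> A" using assms by (auto simp: at_times_def)
  then show ?thesis unfolding x_of_def by measurable
qed

lemma xprod_restrict:
  "at_times {u - int n..<u} \<subseteq> A \<Longrightarrow> xprod (restrict z A) u n = xprod z u n"
proof (induction n arbitrary: u)
  case (Suc n)
  have "at_times {u - 1} \<subseteq> A" "at_times {u - 1 - int n..<u - 1} \<subseteq> A"
    using Suc.prems by (auto simp: at_times_def)
  then show ?case
    using Suc.IH[of "u - 1"] x_of_restrict[of "u - 1" A z] by (simp only: xprod.simps)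
qed simp

lemma xprod_measurable:
  "at_times {u - int n..<u} \<subseteq> A \<Longrightarrow> (\<lambda>z. xprod z u n) \<in> borel_measurable (PiM A (\<lambda>_. borel))"
proof (induction n arbitrary: u)
  case (Suc n)
  have "at_times {u - 1} \<subseteq> A" "at_times {u - 1 - int n..<u - 1} \<subseteq> A"
    using Suc.prems by (auto simp: at_times_def)
  then show ?case
    using Suc.IH x_of_measurable by (simp add: borel_measurable_times)
qed simp

lemma at_times_before: "at_times {u - int n..<u} \<subseteq> at_times {..<u}"
  by (rule at_times_mono) auto

lemma h_series_restrict:
  assumes "at_times {..<u} \<subseteq> A"
  shows "h_series (restrict z A) u = h_series z u"
proof -
  have "xprod (restrict z A) u j = xprod z u j" for j
    using assms at_times_before by (intro xprod_restrict) blast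
  then show ?thesis by (simp add: h_series_def)
qed

lemma h_series_measurable:
  assumes "at_times {..<u} \<subseteq> A"
  shows "(\<lambda>z. h_series z u) \<in> borel_measurable (PiM A (\<lambda>_. borel))"
proof -
  have "(\<lambda>z. xprod z u j) \<in> borel_measurable (PiM A (\<lambda>_. borel))" for j
    using assms at_times_before by (intro xprod_measurable) blast
  then show ?thesis unfolding h_series_def by measurable
qed

subsection \<open>Moments of the noise\<close>

lemma eps_moments:
  "integrable M (\<lambda>\<omega>. \<bar>eps t \<omega>\<bar>)" "expectation (\<lambda>\<omega>. \<bar>eps t \<omega>\<bar>) = sqrt (2 / pi)"
  "integrable M (\<lambda>\<omega>. (eps t \<omega>)\<^sup>2)" "expectation (\<lambda>\<omega>. (eps t \<omega>)\<^sup>2) = 1"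
  using distributed_has_bochner_integral[OF eps_distr normal_density_nonneg _ std_normal_moment_abs_odd[of 0]]
    distributed_has_bochner_integral[OF eps_distr normal_density_nonneg _ std_normal_moment_even[of 1]]
  by simp_all

lemma eta_moments:
  "integrable M (eta t)" "expectation (eta t) = k"
  "integrable M (\<lambda>\<omega>. (eta t \<omega>)\<^sup>2)" "expectation (\<lambda>\<omega>. (eta t \<omega>)\<^sup>2) = k + k\<^sup>2"
proof -
  have Gamma_Suc: "Gamma (k + real (Suc n)) = (k + real n) * Gamma (k + real n)" for n
  proof -
    have "k + real n \<notin> \<int>\<^sub>\<le>\<^sub>0" using k_pos by (auto elim!: nonpos_Ints_cases)
    from Gamma_plus1[OF this] show ?thesis by (simp add: add_ac)
  qed
  have "Gamma k > 0" using k_pos by simp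
  note moment = distributed_has_bochner_integral[OF eta_distr gamma_density_nonneg[OF k_pos] _
      has_bochner_integral_gamma_moment[OF k_pos]]
  show "integrable M (eta t)" "integrable M (\<lambda>\<omega>. (eta t \<omega>)\<^sup>2)"
    using moment(1)[of 1] moment(1)[of 2] by simp_all
  show "expectation (eta t) = k"
    using moment(2)[of 1] \<open>Gamma k > 0\<close> Gamma_Suc[of 0] by simp
  have "expectation (\<lambda>\<omega>. (eta t \<omega>)\<^sup>2) = Gamma (k + 2) / Gamma k"
    using moment(2)[of 2] by simp
  also have "Gamma (k + 2) = (k + 1) * k * Gamma k"
    using Gamma_Suc[of 1] Gamma_Suc[of 0] by (simp add: add_ac)
  also have "(k + 1) * k * Gamma k / Gamma k = k + k\<^sup>2"
    using \<open>Gamma k > 0\<close> by (simp add: power2_eq_square field_simps)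
  finally show "expectation (\<lambda>\<omega>. (eta t \<omega>)\<^sup>2) = k + k\<^sup>2" .
qed

lemma eta_nonneg: "AE \<omega> in M. \<forall>t. 0 \<le> eta t \<omega>"
  using distributed_AE_nonneg[OF eta_distr] by (subst AE_all_countable) (auto simp: gamma_density_def)

lemma indep_noise_restrict:
  assumes "A \<inter> B = {}"
  shows "indep_var (PiM A (\<lambda>_. borel)) (\<lambda>\<omega>. restrict (noise \<omega>) A)
                   (PiM B (\<lambda>_. borel)) (\<lambda>\<omega>. restrict (noise \<omega>) B)"
proof -
  have "(\<lambda>i. case i of Inl t \<Rightarrow> eps t | Inr t \<Rightarrow> eta t) = (\<lambda>i \<omega>. noise \<omega> i)"
    by (auto simp: fun_eq_iff noise_def split: sum.split)
  with indep_noise have "indep_vars (\<lambda>_. borel) (\<lambda>i \<omega>. noise \<omega> i) UNIV"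
    by simp
  from indep_var_restrict[OF this assms] show ?thesis by simp
qed

lemma noise_blocks_expectation_mult:
  fixes F G :: "(int + int \<Rightarrow> real) \<Rightarrow> real"
  assumes "A \<inter> B = {}"
    and "F \<in> borel_measurable (PiM A (\<lambda>_. borel))" "G \<in> borel_measurable (PiM B (\<lambda>_. borel))"
    and "integrable M (\<lambda>\<omega>. F (restrict (noise \<omega>) A))" "integrable M (\<lambda>\<omega>. G (restrict (noise \<omega>) B))"
  shows "integrable M (\<lambda>\<omega>. F (restrict (noise \<omega>) A) * G (restrict (noise \<omega>) B))"
    and "expectation (\<lambda>\<omega>. F (restrict (noise \<omega>) A) * G (restrict (noise \<omega>) B))
       = expectation (\<lambda>\<omega>. F (restrict (noise \<omega>) A)) * expectation (\<lambda>\<omega>. G (restrict (noise \<omega>) B))"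
proof -
  have "indep_var borel (F \<circ> (\<lambda>\<omega>. restrict (noise \<omega>) A)) borel (G \<circ> (\<lambda>\<omega>. restrict (noise \<omega>) B))"
    using indep_var_compose[OF indep_noise_restrict assms(2,3)] assms(1) by simp
  then have indep: "indep_var borel (\<lambda>\<omega>. F (restrict (noise \<omega>) A)) borel (\<lambda>\<omega>. G (restrict (noise \<omega>) B))"
    by (simp add: comp_def)
  show "integrable M (\<lambda>\<omega>. F (restrict (noise \<omega>) A) * G (restrict (noise \<omega>) B))"
    by (rule indep_var_integrable[OF indep assms(4,5)])
  show "expectation (\<lambda>\<omega>. F (restrict (noise \<omega>) A) * G (restrict (noise \<omega>) B))
       = expectation (\<lambda>\<omega>. F (restrict (noise \<omega>) A)) * expectation (\<lambda>\<omega>. G (restrict (noise \<omega>) B))"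
    by (rule indep_var_lebesgue_integral[OF indep assms(4,5)])
qed

lemma abs_eps_mult_eta:
  "integrable M (\<lambda>\<omega>. \<bar>eps t \<omega>\<bar> * eta t \<omega>)"
  "expectation (\<lambda>\<omega>. \<bar>eps t \<omega>\<bar> * eta t \<omega>) = sqrt (2 / pi) * k"
proof -
  have F: "(\<lambda>z. \<bar>z (Inl t)\<bar>) \<in> borel_measurable (PiM {Inl t} (\<lambda>_. borel :: real measure))"
    and G: "(\<lambda>z. z (Inr t)) \<in> borel_measurable (PiM {Inr t} (\<lambda>_. borel :: real measure))"
    by measurable
  note product = noise_blocks_expectation_mult[OF _ F G]
  show "integrable M (\<lambda>\<omega>. \<bar>eps t \<omega>\<bar> * eta t \<omega>)"
    using product(1) eps_moments eta_moments by (simp add: noise_def)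
  show "expectation (\<lambda>\<omega>. \<bar>eps t \<omega>\<bar> * eta t \<omega>) = sqrt (2 / pi) * k"
    using product(2) eps_moments eta_moments by (simp add: noise_def)
qed

lemma X_moments:
  "integrable M (X t)" "expectation (X t) = C1"
  "integrable M (\<lambda>\<omega>. (X t \<omega>)\<^sup>2)" "expectation (\<lambda>\<omega>. (X t \<omega>)\<^sup>2) = C2"
proof -
  note integrable = eps_moments(1,3)[of t] eta_moments(1,3)[of t] abs_eps_mult_eta(1)[of t]
  have square: "(X t \<omega>)\<^sup>2 = \<alpha>1\<^sup>2 * (eps t \<omega>)\<^sup>2 + \<beta>1\<^sup>2 * (eta t \<omega>)\<^sup>2 + \<gamma>1\<^sup>2
      + 2 * \<alpha>1 * \<beta>1 * (\<bar>eps t \<omega>\<bar> * eta t \<omega>) + 2 * \<alpha>1 * \<gamma>1 * \<bar>eps t \<omega>\<bar> + 2 * \<beta>1 * \<gamma>1 * eta t \<omega>" for \<omega>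
    by (simp add: X_def power2_eq_square algebra_simps abs_mult_self_eq)
  show "integrable M (X t)"
    unfolding X_def using integrable by auto
  show "integrable M (\<lambda>\<omega>. (X t \<omega>)\<^sup>2)"
    unfolding square using integrable by auto
  show "expectation (X t) = C1" "expectation (\<lambda>\<omega>. (X t \<omega>)\<^sup>2) = C2"
    using C1_def C2_def by (simp_all add: X_def[abs_def])
qed

lemma eta_mult_X:
  "integrable M (\<lambda>\<omega>. eta t \<omega> * X t \<omega>)"
  "expectation (\<lambda>\<omega>. eta t \<omega> * X t \<omega>) = \<alpha>1 * sqrt (2 / pi) * k + \<beta>1 * (k + k\<^sup>2) + \<gamma>1 * k"
proof -
  have expand: "eta t \<omega> * X t \<omega> = \<alpha>1 * (\<bar>eps t \<omega>\<bar> * eta t \<omega>) + \<beta>1 * (eta t \<omega>)\<^sup>2 + \<gamma>1 * eta t \<omega>" for \<omega>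
    by (simp add: X_def power2_eq_square algebra_simps)
  show "integrable M (\<lambda>\<omega>. eta t \<omega> * X t \<omega>)"
    unfolding expand using eta_moments abs_eps_mult_eta by auto
  show "expectation (\<lambda>\<omega>. eta t \<omega> * X t \<omega>) = \<alpha>1 * sqrt (2 / pi) * k + \<beta>1 * (k + k\<^sup>2) + \<gamma>1 * k"
    unfolding expand using eta_moments abs_eps_mult_eta by simp
qed

lemma C2_nonneg: "0 \<le> C2"
proof -
  have "0 \<le> expectation (\<lambda>\<omega>. (X 0 \<omega>)\<^sup>2)"
    by (rule Bochner_Integration.integral_nonneg) simp
  then show ?thesis using X_moments(4)[of 0] by simp
qed

lemma C1_pos: "0 < C1"
  using C2_nonneg C2_less_C1 by simp

lemma X_nonneg: "AE \<omega> in M. \<forall>t. 0 \<le> X t \<omega>"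
  using eta_nonneg by eventually_elim (use \<alpha>1_pos \<beta>1_pos \<gamma>1_pos in \<open>simp add: X_def\<close>)

lemma xprod_noise_nonneg: "AE \<omega> in M. \<forall>u n. 0 \<le> xprod (noise \<omega>) u n"
  using X_nonneg
proof eventually_elim
  case (elim \<omega>)
  have "0 \<le> xprod (noise \<omega>) u n" for u n
    by (induction n arbitrary: u) (use elim in \<open>simp_all add: X_eq_x_of\<close>)
  then show ?case by blast
qed

subsection \<open>Positivity and the causal representation of \<open>h\<close>\<close>

lemma xprod_noise_square:
  "integrable M (\<lambda>\<omega>. (xprod (noise \<omega>) u n)\<^sup>2) \<and> expectation (\<lambda>\<omega>. (xprod (noise \<omega>) u n)\<^sup>2) = C2 ^ n"
proof (induction n arbitrary: u)
  case 0
  then show ?case by (simp add: prob_space)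
next
  case (Suc n)
  have past: "at_times {u - 1 - int n..<u - 1} \<subseteq> at_times {..<u - 1}"
    by (rule at_times_mono) auto
  have F: "(\<lambda>z. (xprod z (u - 1) n)\<^sup>2) \<in> borel_measurable (PiM (at_times {..<u - 1}) (\<lambda>_. borel))"
    using xprod_measurable[OF past] by measurable
  have G: "(\<lambda>z. (x_of z (u - 1))\<^sup>2) \<in> borel_measurable (PiM (at_times {u - 1}) (\<lambda>_. borel))"
    using x_of_measurable[of "u - 1"] by measurable
  have disjoint: "at_times {..<u - 1} \<inter> at_times {u - 1} = {}"
    by (rule at_times_disjoint) auto
  note product = noise_blocks_expectation_mult[OF disjoint F G,
      unfolded xprod_restrict[OF past] x_of_restrict[OF order_refl], folded X_eq_x_of]
  have "(xprod (noise \<omega>) u (Suc n))\<^sup>2 = (xprod (noise \<omega>) (u - 1) n)\<^sup>2 * (X (u - 1) \<omega>)\<^sup>2" for \<omega>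
    by (simp add: X_eq_x_of power_mult_distrib)
  then show ?case using product Suc.IH X_moments(3,4) by simp
qed

lemma integrable_abs_h_mult_xprod:
  "integrable M (\<lambda>\<omega>. \<bar>h (u - int n) \<omega>\<bar> * xprod (noise \<omega>) u n)"
proof (rule Bochner_Integration.integrable_bound)
  show "integrable M (\<lambda>\<omega>. ((h (u - int n) \<omega>)\<^sup>2 + (xprod (noise \<omega>) u n)\<^sup>2) / 2)"
    using finite_var xprod_noise_square by auto
  show "AE \<omega> in M. norm (\<bar>h (u - int n) \<omega>\<bar> * xprod (noise \<omega>) u n)
      \<le> norm (((h (u - int n) \<omega>)\<^sup>2 + (xprod (noise \<omega>) u n)\<^sup>2) / 2)"
    using mult_le_weighted_squares[of 1 "\<bar>h (u - int n) _\<bar>" "\<bar>xprod (noise _) u n\<bar>"]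
    by (intro AE_I2) (simp add: abs_mult)
qed measurable

lemma expectation_abs_h_mult_xprod_le:
  assumes B: "\<And>t. expectation (\<lambda>\<omega>. (h t \<omega>)\<^sup>2) \<le> B"
  shows "expectation (\<lambda>\<omega>. \<bar>h (u - int n) \<omega>\<bar> * xprod (noise \<omega>) u n) \<le> (B + 1) / 2 * sqrt C1 ^ n"
proof -
  define c where "c = sqrt C1 ^ n"
  have c: "c > 0" "c\<^sup>2 = C1 ^ n"
    using C1_pos by (simp_all add: c_def power2_eq_square flip: power_mult_distrib)
  define g where "g \<omega> = (c * (h (u - int n) \<omega>)\<^sup>2 + (xprod (noise \<omega>) u n)\<^sup>2 / c) / 2" for \<omega>
  have "expectation (\<lambda>\<omega>. \<bar>h (u - int n) \<omega>\<bar> * xprod (noise \<omega>) u n) \<le> expectation g"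
  proof (rule Bochner_Integration.integral_mono)
    show "integrable M g" unfolding g_def using finite_var xprod_noise_square by auto
    show "\<bar>h (u - int n) \<omega>\<bar> * xprod (noise \<omega>) u n \<le> g \<omega>" for \<omega>
    proof -
      have "\<bar>h (u - int n) \<omega>\<bar> * xprod (noise \<omega>) u n \<le> \<bar>h (u - int n) \<omega>\<bar> * \<bar>xprod (noise \<omega>) u n\<bar>"
        by (intro mult_left_mono) auto
      then show ?thesis
        using mult_le_weighted_squares[OF c(1), of "\<bar>h (u - int n) \<omega>\<bar>" "\<bar>xprod (noise \<omega>) u n\<bar>"]
        by (simp add: g_def)
    qed
  qed (rule integrable_abs_h_mult_xprod)
  also have "expectation g = (c * expectation (\<lambda>\<omega>. (h (u - int n) \<omega>)\<^sup>2) + C2 ^ n / c) / 2"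
    unfolding g_def using finite_var xprod_noise_square by simp
  also have "\<dots> \<le> (c * B + c) / 2"
  proof -
    have "C2 ^ n \<le> c\<^sup>2" unfolding c(2) using C2_nonneg C2_less_C1 by (intro power_mono) auto
    then have "C2 ^ n / c \<le> c" using c by (simp add: field_simps power2_eq_square)
    then show ?thesis using B c by (intro divide_right_mono add_mono mult_left_mono) auto
  qed
  finally show ?thesis by (simp add: c_def algebra_simps)
qed

text \<open>The remainder \<open>h\<^sub>u\<^sub>-\<^sub>n x\<^sub>u\<^sub>-\<^sub>1 \<cdots> x\<^sub>u\<^sub>-\<^sub>n\<close> of the iterated recursion vanishes in \<open>L\<^sup>1\<close>.\<close>

lemma AE_zero_if_le_remainder:
  assumes "integrable M Z" "AE \<omega> in M. 0 \<le> Z \<omega>"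
    and remainder: "\<And>n. AE \<omega> in M. Z \<omega> \<le> \<bar>h (u - int n) \<omega>\<bar> * xprod (noise \<omega>) u n"
  shows "AE \<omega> in M. Z \<omega> = 0"
proof -
  obtain B where B: "\<And>t. expectation (\<lambda>\<omega>. (h t \<omega>)\<^sup>2) \<le> B" using bounded_var by blast
  have "expectation Z \<le> (B + 1) / 2 * sqrt C1 ^ n" for n
    using integral_mono_AE[OF assms(1) integrable_abs_h_mult_xprod remainder[of n]]
      expectation_abs_h_mult_xprod_le[OF B, of u n]
    by linarith
  then have "expectation Z \<le> 0"
    using C1_pos C1_less_1 by (intro nonpos_if_le_geometric[where r = "sqrt C1" and K = "(B + 1) / 2"]) auto
  moreover have "0 \<le> expectation Z" using assms(2) by (rule integral_nonneg_AE)
  ultimately show ?thesis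
    using integral_nonneg_eq_0_iff_AE[OF assms(1,2)] by simp
qed

lemma neg_part_h_step:
  assumes "\<omega> \<in> space M" "0 \<le> eta (u - 1) \<omega>"
  shows "max (- h u \<omega>) 0 \<le> max (- h (u - 1) \<omega>) 0 * X (u - 1) \<omega>"
proof (cases "0 \<le> h (u - 1) \<omega>")
  case True
  then have "0 \<le> h u \<omega>"
    using rec[OF assms(1), of u] assms(2) \<mu>_pos \<alpha>1_pos \<beta>1_pos \<gamma>1_pos by simp
  then show ?thesis using True by simp
next
  case False
  then have neg: "h (u - 1) \<omega> < 0" by simp
  have "- h u \<omega> = - \<mu> + \<alpha>1 * (h (u - 1) \<omega> * \<bar>eps (u - 1) \<omega>\<bar>)
      - \<beta>1 * (h (u - 1) \<omega> * eta (u - 1) \<omega>) - \<gamma>1 * h (u - 1) \<omega>"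
    using rec[OF assms(1), of u] by (simp add: abs_mult abs_of_neg[OF neg])
  moreover have "- h (u - 1) \<omega> * X (u - 1) \<omega> = - \<alpha>1 * (h (u - 1) \<omega> * \<bar>eps (u - 1) \<omega>\<bar>)
      - \<beta>1 * (h (u - 1) \<omega> * eta (u - 1) \<omega>) - \<gamma>1 * h (u - 1) \<omega>"
    by (simp add: X_def algebra_simps)
  moreover have "\<alpha>1 * (h (u - 1) \<omega> * \<bar>eps (u - 1) \<omega>\<bar>) \<le> 0"
    using neg \<alpha>1_pos by (intro mult_nonneg_nonpos mult_nonpos_nonneg) auto
  ultimately have "- h u \<omega> \<le> - h (u - 1) \<omega> * X (u - 1) \<omega>"
    using \<mu>_pos by linarith
  moreover have "0 \<le> - h (u - 1) \<omega> * X (u - 1) \<omega>"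
    using neg assms(2) \<alpha>1_pos \<beta>1_pos \<gamma>1_pos by (intro mult_nonneg_nonneg) (auto simp: X_def)
  ultimately show ?thesis using False by simp
qed

lemma integrable_h: "integrable M (h t)"
  using square_integrable_imp_integrable[OF meas_h finite_var] .

lemma h_nonneg: "AE \<omega> in M. \<forall>u. 0 \<le> h u \<omega>"
proof (subst AE_all_countable, intro allI)
  fix u
  have "AE \<omega> in M. max (- h u \<omega>) 0 = 0"
  proof (rule AE_zero_if_le_remainder)
    show "integrable M (\<lambda>\<omega>. max (- h u \<omega>) 0)"
      using integrable_h by auto
    show "AE \<omega> in M. 0 \<le> max (- h u \<omega>) 0" by simp
    fix n
    show "AE \<omega> in M. max (- h u \<omega>) 0 \<le> \<bar>h (u - int n) \<omega>\<bar> * xprod (noise \<omega>) u n"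
      using eta_nonneg X_nonneg xprod_noise_nonneg AE_space
    proof eventually_elim
      case (elim \<omega>)
      have iterate: "max (- h v \<omega>) 0 \<le> max (- h (v - int m) \<omega>) 0 * xprod (noise \<omega>) v m" for v m
      proof (induction m arbitrary: v)
        case (Suc m)
        have "max (- h v \<omega>) 0 \<le> max (- h (v - 1) \<omega>) 0 * X (v - 1) \<omega>"
          using neg_part_h_step elim by blast
        also have "\<dots> \<le> max (- h (v - 1 - int m) \<omega>) 0 * xprod (noise \<omega>) (v - 1) m * X (v - 1) \<omega>"
          using Suc.IH elim by (intro mult_right_mono) auto
        finally show ?case by (simp add: X_eq_x_of algebra_simps)
      qed simp
      have "max (- h (u - int n) \<omega>) 0 * xprod (noise \<omega>) u n \<le> \<bar>h (u - int n) \<omega>\<bar> * xprod (noise \<omega>) u n"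
        using elim by (intro mult_right_mono) auto
      with iterate[of u n] show ?case by linarith
    qed
  qed
  then show "AE \<omega> in M. 0 \<le> h u \<omega>" by eventually_elim simp
qed

lemma h_rec: "AE \<omega> in M. \<forall>u. h u \<omega> = \<mu> + X (u - 1) \<omega> * h (u - 1) \<omega>"
  using h_nonneg AE_space
proof eventually_elim
  case (elim \<omega>)
  show ?case
  proof
    fix u
    show "h u \<omega> = \<mu> + X (u - 1) \<omega> * h (u - 1) \<omega>"
      using rec[OF elim(2), of u] elim(1)[rule_format, of "u - 1"]
      by (simp add: X_def abs_mult algebra_simps)
  qed
qed

lemma h_rec_at: "AE \<omega> in M. h u \<omega> = \<mu> + X (u - 1) \<omega> * h (u - 1) \<omega>"
  using h_rec by eventually_elim blast

lemma h_partial_sum: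
  "AE \<omega> in M. \<forall>u n. h u \<omega> = \<mu> * (\<Sum>j<n. xprod (noise \<omega>) u j) + h (u - int n) \<omega> * xprod (noise \<omega>) u n"
  using h_rec
proof eventually_elim
  case (elim \<omega>)
  have "h u \<omega> = \<mu> * (\<Sum>j<n. xprod (noise \<omega>) u j) + h (u - int n) \<omega> * xprod (noise \<omega>) u n" for u n
  proof (induction n arbitrary: u)
    case (Suc n)
    have "h u \<omega> = \<mu> + X (u - 1) \<omega> * h (u - 1) \<omega>"
      using elim by blast
    also have "\<dots> = \<mu> + X (u - 1) \<omega> * (\<mu> * (\<Sum>j<n. xprod (noise \<omega>) (u - 1) j)
        + h (u - 1 - int n) \<omega> * xprod (noise \<omega>) (u - 1) n)"
      by (simp only: Suc.IH[of "u - 1"])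
    also have "\<dots> = \<mu> * (\<Sum>j<Suc n. xprod (noise \<omega>) u j) + h (u - int (Suc n)) \<omega> * xprod (noise \<omega>) u (Suc n)"
      by (simp add: sum.lessThan_Suc_shift X_eq_x_of sum_distrib_left algebra_simps del: sum.lessThan_Suc)
    finally show ?case .
  qed simp
  then show ?case by blast
qed

lemma h_series_noise_measurable[measurable]: "(\<lambda>\<omega>. h_series (noise \<omega>) u) \<in> borel_measurable M"
  unfolding h_series_def by measurable

lemma h_eq_h_series: "AE \<omega> in M. h u \<omega> = h_series (noise \<omega>) u"
proof -
  have sandwich: "AE \<omega> in M. 0 \<le> h_series (noise \<omega>) u \<and> h_series (noise \<omega>) u \<le> h u \<omega>
      \<and> (\<forall>n. h u \<omega> - h_series (noise \<omega>) u \<le> \<bar>h (u - int n) \<omega>\<bar> * xprod (noise \<omega>) u n)"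
    using h_partial_sum xprod_noise_nonneg h_nonneg
  proof eventually_elim
    case (elim \<omega>)
    have P: "0 \<le> xprod (noise \<omega>) u j" for j
      using elim(2) by blast
    have r: "0 \<le> h (u - int n) \<omega> * xprod (noise \<omega>) u n" for n
      using elim(2,3) by simp
    have partial: "h u \<omega> = \<mu> * (\<Sum>j<n. xprod (noise \<omega>) u j) + h (u - int n) \<omega> * xprod (noise \<omega>) u n" for n
      using elim(1) by blast
    note remainder = nonneg_series_remainder[OF P \<mu>_pos r partial]
    have abs_bound: "h (u - int n) \<omega> * xprod (noise \<omega>) u n \<le> \<bar>h (u - int n) \<omega>\<bar> * xprod (noise \<omega>) u n" for n
      using P by (intro mult_right_mono) auto
    show ?case
      using remainder(2,3) order_trans[OF remainder(4) abs_bound] by (simp add: h_series_def)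
  qed
  have "integrable M (\<lambda>\<omega>. h_series (noise \<omega>) u)"
    by (rule Bochner_Integration.integrable_bound[OF integrable_h[of u]])
      (use sandwich in \<open>measurable, eventually_elim, simp\<close>)
  then have "AE \<omega> in M. h u \<omega> - h_series (noise \<omega>) u = 0"
    using integrable_h[of u] sandwich
    by (intro AE_zero_if_le_remainder) (auto elim: AE_mp)
  then show ?thesis by eventually_elim simp
qed

lemma h_eq_h_series_restrict:
  "at_times {..<u} \<subseteq> A \<Longrightarrow> AE \<omega> in M. h u \<omega> = h_series (restrict (noise \<omega>) A) u"
  using h_eq_h_series[of u] by (simp add: h_series_restrict)

subsection \<open>First and second moments of \<open>h\<close>\<close>

lemma present_noise_h_expectation_mult:
  fixes F :: "real \<Rightarrow> real \<Rightarrow> real" and \<phi> :: "real \<Rightarrow> real"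
  assumes F: "(\<lambda>p. F (fst p) (snd p)) \<in> borel_measurable (borel \<Otimes>\<^sub>M borel)"
    and \<phi>: "\<phi> \<in> borel_measurable borel"
    and "integrable M (\<lambda>\<omega>. F (eps t \<omega>) (eta t \<omega>))" "integrable M (\<lambda>\<omega>. \<phi> (h t \<omega>))"
  shows "integrable M (\<lambda>\<omega>. F (eps t \<omega>) (eta t \<omega>) * \<phi> (h t \<omega>))"
    and "expectation (\<lambda>\<omega>. F (eps t \<omega>) (eta t \<omega>) * \<phi> (h t \<omega>))
         = expectation (\<lambda>\<omega>. F (eps t \<omega>) (eta t \<omega>)) * expectation (\<lambda>\<omega>. \<phi> (h t \<omega>))"
proof -
  have \<phi>': "(\<lambda>f. \<phi> (f t)) \<in> borel_measurable (PiM {..t} (\<lambda>_. borel))"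
    using \<phi> by measurable
  have "indep_var borel (\<lambda>\<omega>. F (fst (eps t \<omega>, eta t \<omega>)) (snd (eps t \<omega>, eta t \<omega>)))
      borel (\<lambda>\<omega>. \<phi> ((\<lambda>s\<in>{..t}. h s \<omega>) t))"
    by (rule indep_var_compose_vimage[OF _ _ indep_past F \<phi>']) measurable
  then have indep: "indep_var borel (\<lambda>\<omega>. F (eps t \<omega>) (eta t \<omega>)) borel (\<lambda>\<omega>. \<phi> (h t \<omega>))"
    by simp
  show "integrable M (\<lambda>\<omega>. F (eps t \<omega>) (eta t \<omega>) * \<phi> (h t \<omega>))"
    by (rule indep_var_integrable[OF indep assms(3,4)])
  show "expectation (\<lambda>\<omega>. F (eps t \<omega>) (eta t \<omega>) * \<phi> (h t \<omega>))
         = expectation (\<lambda>\<omega>. F (eps t \<omega>) (eta t \<omega>)) * expectation (\<lambda>\<omega>. \<phi> (h t \<omega>))"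
    by (rule indep_var_lebesgue_integral[OF indep assms(3,4)])
qed

lemma X_mult_h:
  "integrable M (\<lambda>\<omega>. X t \<omega> * h t \<omega>)" "expectation (\<lambda>\<omega>. X t \<omega> * h t \<omega>) = C1 * expectation (h t)"
proof -
  have "(\<lambda>p. \<alpha>1 * \<bar>fst p\<bar> + \<beta>1 * snd p + \<gamma>1) \<in> borel_measurable (borel \<Otimes>\<^sub>M borel)"
    by measurable
  note product = present_noise_h_expectation_mult[OF this, of "\<lambda>x. x", folded X_def]
  show "integrable M (\<lambda>\<omega>. X t \<omega> * h t \<omega>)" "expectation (\<lambda>\<omega>. X t \<omega> * h t \<omega>) = C1 * expectation (h t)"
    using product X_moments(1,2) integrable_h by simp_all
qed

lemma X_square_mult_h_square:
  "integrable M (\<lambda>\<omega>. (X t \<omega>)\<^sup>2 * (h t \<omega>)\<^sup>2)"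
  "expectation (\<lambda>\<omega>. (X t \<omega>)\<^sup>2 * (h t \<omega>)\<^sup>2) = C2 * expectation (\<lambda>\<omega>. (h t \<omega>)\<^sup>2)"
proof -
  have "(\<lambda>p. (\<alpha>1 * \<bar>fst p\<bar> + \<beta>1 * snd p + \<gamma>1)\<^sup>2) \<in> borel_measurable (borel \<Otimes>\<^sub>M borel)"
    by measurable
  note product = present_noise_h_expectation_mult[OF this, of "\<lambda>x. x\<^sup>2", folded X_def]
  show "integrable M (\<lambda>\<omega>. (X t \<omega>)\<^sup>2 * (h t \<omega>)\<^sup>2)"
    "expectation (\<lambda>\<omega>. (X t \<omega>)\<^sup>2 * (h t \<omega>)\<^sup>2) = C2 * expectation (\<lambda>\<omega>. (h t \<omega>)\<^sup>2)"
    using product X_moments(3,4) finite_var by simp_all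
qed

lemma expectation_h: "expectation (h u) = \<mu> / (1 - C1)"
proof -
  obtain B where B: "\<And>t. expectation (\<lambda>\<omega>. (h t \<omega>)\<^sup>2) \<le> B" using bounded_var by blast
  show ?thesis
  proof (rule bounded_solution_affine_recurrence[where a = "\<lambda>u. expectation (h u)" and K = "(B + 1) / 2"])
    show "expectation (h v) = \<mu> + C1 * expectation (h (v - 1))" for v
    proof -
      have "expectation (h v) = expectation (\<lambda>\<omega>. \<mu> + X (v - 1) \<omega> * h (v - 1) \<omega>)"
        by (rule integral_cong_AE[OF _ _ h_rec_at]) measurable
      also have "\<dots> = \<mu> + C1 * expectation (h (v - 1))"
        using X_mult_h[of "v - 1"] by (simp add: prob_space)
      finally show ?thesis .
    qed
    show "\<bar>expectation (h v)\<bar> \<le> (B + 1) / 2" for v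
    proof -
      have "\<bar>expectation (h v)\<bar> \<le> expectation (\<lambda>\<omega>. \<bar>h v \<omega>\<bar>)"
        by (rule integral_abs_bound)
      also have "\<dots> \<le> expectation (\<lambda>\<omega>. ((h v \<omega>)\<^sup>2 + 1) / 2)"
        using integrable_h finite_var mult_le_weighted_squares[of 1 "\<bar>h v _\<bar>" 1]
        by (intro Bochner_Integration.integral_mono) auto
      also have "\<dots> = (expectation (\<lambda>\<omega>. (h v \<omega>)\<^sup>2) + 1) / 2"
        using finite_var by (simp add: prob_space)
      also have "\<dots> \<le> (B + 1) / 2"
        using B[of v] by simp
      finally show ?thesis .
    qed
  qed (use C1_pos C1_less_1 in auto)
qed

lemma expectation_h_square: "expectation (\<lambda>\<omega>. (h u \<omega>)\<^sup>2) = \<mu>\<^sup>2 * (1 + C1) / ((1 - C1) * (1 - C2))"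
proof -
  obtain B where B: "\<And>t. expectation (\<lambda>\<omega>. (h t \<omega>)\<^sup>2) \<le> B" using bounded_var by blast
  have "expectation (\<lambda>\<omega>. (h u \<omega>)\<^sup>2) = \<mu>\<^sup>2 * (1 + C1) / (1 - C1) / (1 - C2)"
  proof (rule bounded_solution_affine_recurrence[where a = "\<lambda>u. expectation (\<lambda>\<omega>. (h u \<omega>)\<^sup>2)" and K = B])
    show "expectation (\<lambda>\<omega>. (h v \<omega>)\<^sup>2) = \<mu>\<^sup>2 * (1 + C1) / (1 - C1) + C2 * expectation (\<lambda>\<omega>. (h (v - 1) \<omega>)\<^sup>2)" for v
    proof -
      have "AE \<omega> in M. (h v \<omega>)\<^sup>2 = \<mu>\<^sup>2 + (2 * \<mu>) * (X (v - 1) \<omega> * h (v - 1) \<omega>)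
          + (X (v - 1) \<omega>)\<^sup>2 * (h (v - 1) \<omega>)\<^sup>2"
        using h_rec_at[of v] by eventually_elim (simp add: power2_eq_square algebra_simps)
      then have "expectation (\<lambda>\<omega>. (h v \<omega>)\<^sup>2) = expectation (\<lambda>\<omega>. \<mu>\<^sup>2 + (2 * \<mu>) * (X (v - 1) \<omega> * h (v - 1) \<omega>)
          + (X (v - 1) \<omega>)\<^sup>2 * (h (v - 1) \<omega>)\<^sup>2)"
        by (rule integral_cong_AE[rotated 2]) measurable
      also have "\<dots> = \<mu>\<^sup>2 + 2 * \<mu> * (C1 * (\<mu> / (1 - C1))) + C2 * expectation (\<lambda>\<omega>. (h (v - 1) \<omega>)\<^sup>2)"
        using X_mult_h[of "v - 1"] X_square_mult_h_square[of "v - 1"] expectation_h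
        by (simp add: prob_space)
      also have "\<mu>\<^sup>2 + 2 * \<mu> * (C1 * (\<mu> / (1 - C1))) = \<mu>\<^sup>2 * (1 + C1) / (1 - C1)"
        using C1_less_1 by (simp add: power2_eq_square field_simps)
      finally show ?thesis .
    qed
    show "\<bar>expectation (\<lambda>\<omega>. (h v \<omega>)\<^sup>2)\<bar> \<le> B" for v
    proof -
      have "0 \<le> expectation (\<lambda>\<omega>. (h v \<omega>)\<^sup>2)"
        by (rule Bochner_Integration.integral_nonneg) simp
      then show ?thesis using B[of v] by simp
    qed
  qed (use C2_nonneg C2_less_C1 C1_less_1 in auto)
  then show ?thesis by (simp add: field_simps)
qed

subsection \<open>The cross moments \<open>E(h\<^sub>t h\<^sub>t\<^sub>+\<^sub>s \<eta>\<^sub>t)\<close>\<close>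

lemma eta_mult_h:
  "integrable M (\<lambda>\<omega>. eta t \<omega> * h t \<omega>)" "expectation (\<lambda>\<omega>. eta t \<omega> * h t \<omega>) = k * (\<mu> / (1 - C1))"
proof -
  have "(\<lambda>p. snd p) \<in> borel_measurable (borel \<Otimes>\<^sub>M borel :: (real \<times> real) measure)"
    by measurable
  note product = present_noise_h_expectation_mult[of "\<lambda>a b. b", OF this, of "\<lambda>x. x" t]
  show "integrable M (\<lambda>\<omega>. eta t \<omega> * h t \<omega>)" "expectation (\<lambda>\<omega>. eta t \<omega> * h t \<omega>) = k * (\<mu> / (1 - C1))"
    using product eta_moments(1,2) integrable_h expectation_h by simp_all
qed

lemma eta_X_mult_h_square:
  "integrable M (\<lambda>\<omega>. eta t \<omega> * X t \<omega> * (h t \<omega>)\<^sup>2)"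
  "expectation (\<lambda>\<omega>. eta t \<omega> * X t \<omega> * (h t \<omega>)\<^sup>2)
     = k * (\<alpha>1 * sqrt (2 / pi) + \<beta>1 * (1 + k) + \<gamma>1) * (\<mu>\<^sup>2 * (1 + C1) / ((1 - C1) * (1 - C2)))"
proof -
  have "(\<lambda>p. snd p * (\<alpha>1 * \<bar>fst p\<bar> + \<beta>1 * snd p + \<gamma>1)) \<in> borel_measurable (borel \<Otimes>\<^sub>M borel)"
    by measurable
  note product = present_noise_h_expectation_mult[OF this, of "\<lambda>x. x\<^sup>2" t, folded X_def]
  have "k * (\<alpha>1 * sqrt (2 / pi) + \<beta>1 * (1 + k) + \<gamma>1) = \<alpha>1 * sqrt (2 / pi) * k + \<beta>1 * (k + k\<^sup>2) + \<gamma>1 * k"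
    by (simp add: power2_eq_square algebra_simps)
  then show "integrable M (\<lambda>\<omega>. eta t \<omega> * X t \<omega> * (h t \<omega>)\<^sup>2)"
    "expectation (\<lambda>\<omega>. eta t \<omega> * X t \<omega> * (h t \<omega>)\<^sup>2)
     = k * (\<alpha>1 * sqrt (2 / pi) + \<beta>1 * (1 + k) + \<gamma>1) * (\<mu>\<^sup>2 * (1 + C1) / ((1 - C1) * (1 - C2)))"
    using product eta_mult_X finite_var expectation_h_square by simp_all
qed

lemma integrable_h_h_eta: "integrable M (\<lambda>\<omega>. h t \<omega> * h u \<omega> * eta t \<omega>)"
proof (rule Bochner_Integration.integrable_bound)
  have "(\<lambda>p. (snd p)\<^sup>2) \<in> borel_measurable (borel \<Otimes>\<^sub>M borel :: (real \<times> real) measure)"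
    by measurable
  then have "integrable M (\<lambda>\<omega>. (eta t \<omega>)\<^sup>2 * (h t \<omega>)\<^sup>2)"
    using present_noise_h_expectation_mult(1)[of "\<lambda>a b. b\<^sup>2" "\<lambda>x. x\<^sup>2" t] eta_moments(3) finite_var
    by simp
  then show "integrable M (\<lambda>\<omega>. ((eta t \<omega> * h t \<omega>)\<^sup>2 + (h u \<omega>)\<^sup>2) / 2)"
    using finite_var by (simp add: power_mult_distrib)
  show "AE \<omega> in M. norm (h t \<omega> * h u \<omega> * eta t \<omega>) \<le> norm (((eta t \<omega> * h t \<omega>)\<^sup>2 + (h u \<omega>)\<^sup>2) / 2)"
    using mult_le_weighted_squares[of 1 "\<bar>eta t _ * h t _\<bar>" "\<bar>h u _\<bar>"]
    by (intro AE_I2) (simp add: abs_mult algebra_simps)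
qed measurable

lemma cross_moment_1:
  "expectation (\<lambda>\<omega>. h t \<omega> * h (t + 1) \<omega> * eta t \<omega>)
     = \<mu> * k * (\<mu> / (1 - C1))
       + k * (\<alpha>1 * sqrt (2 / pi) + \<beta>1 * (1 + k) + \<gamma>1) * (\<mu>\<^sup>2 * (1 + C1) / ((1 - C1) * (1 - C2)))"
proof -
  have "AE \<omega> in M. h t \<omega> * h (t + 1) \<omega> * eta t \<omega>
      = \<mu> * (eta t \<omega> * h t \<omega>) + eta t \<omega> * X t \<omega> * (h t \<omega>)\<^sup>2"
    using h_rec_at[of "t + 1"] by eventually_elim (simp add: power2_eq_square algebra_simps)
  then have "expectation (\<lambda>\<omega>. h t \<omega> * h (t + 1) \<omega> * eta t \<omega>)
      = expectation (\<lambda>\<omega>. \<mu> * (eta t \<omega> * h t \<omega>) + eta t \<omega> * X t \<omega> * (h t \<omega>)\<^sup>2)"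
    by (rule integral_cong_AE[rotated 2]) measurable
  then show ?thesis
    using eta_mult_h eta_X_mult_h_square by simp
qed

text \<open>
  The assumption \<open>indep_past\<close> separates the present noise only from past values of \<open>h\<close>, not
  from past noise such as \<open>\<eta>\<^sub>t\<close>; the causal representation of \<open>h\<close> bridges the gap.
\<close>

lemma X_indep_past_expectation_mult:
  assumes F: "F \<in> borel_measurable (PiM (at_times {..<v}) (\<lambda>_. borel))"
    and W: "AE \<omega> in M. W \<omega> = F (restrict (noise \<omega>) (at_times {..<v}))" "integrable M W"
  shows "integrable M (\<lambda>\<omega>. W \<omega> * X v \<omega>)" and "expectation (\<lambda>\<omega>. W \<omega> * X v \<omega>) = C1 * expectation W"
proof -
  have G: "(\<lambda>z. x_of z v) \<in> borel_measurable (PiM (at_times {v}) (\<lambda>_. borel))"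
    by (rule x_of_measurable) simp
  have disjoint: "at_times {..<v} \<inter> at_times {v} = {}"
    by (rule at_times_disjoint) auto
  have F_measurable: "(\<lambda>\<omega>. F (restrict (noise \<omega>) (at_times {..<v}))) \<in> borel_measurable M"
    using measurable_compose[OF restrict_noise_measurable F] .
  have integrable_F: "integrable M (\<lambda>\<omega>. F (restrict (noise \<omega>) (at_times {..<v})))"
    by (rule integrable_cong_AE_imp[OF W(2) F_measurable W(1)])
  have integrable_G: "integrable M (\<lambda>\<omega>. x_of (restrict (noise \<omega>) (at_times {v})) v)"
    using X_moments(1)[of v] by (simp add: x_of_restrict flip: X_eq_x_of)
  note product = noise_blocks_expectation_mult[OF disjoint F G integrable_F integrable_G,
      unfolded x_of_restrict[OF order_refl], folded X_eq_x_of]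
  have W_measurable[measurable]: "W \<in> borel_measurable M"
    using W(2) by (rule borel_measurable_integrable)
  have W_X: "AE \<omega> in M. W \<omega> * X v \<omega> = F (restrict (noise \<omega>) (at_times {..<v})) * X v \<omega>"
    using W(1) by eventually_elim simp
  show "integrable M (\<lambda>\<omega>. W \<omega> * X v \<omega>)"
    by (rule integrable_cong_AE_imp[OF product(1) _ AE_symmetric[OF W_X]]) measurable
  have "expectation (\<lambda>\<omega>. W \<omega> * X v \<omega>) = expectation (\<lambda>\<omega>. F (restrict (noise \<omega>) (at_times {..<v})) * X v \<omega>)"
    by (rule integral_cong_AE[OF _ _ W_X]) (auto intro!: borel_measurable_times F_measurable)
  also have "\<dots> = expectation (\<lambda>\<omega>. F (restrict (noise \<omega>) (at_times {..<v}))) * C1"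
    unfolding product(2) X_moments(2) ..
  also have "expectation (\<lambda>\<omega>. F (restrict (noise \<omega>) (at_times {..<v}))) = expectation W"
    by (rule integral_cong_AE[OF F_measurable W_measurable AE_symmetric[OF W(1)]])
  finally show "expectation (\<lambda>\<omega>. W \<omega> * X v \<omega>) = C1 * expectation W" by simp
qed

lemma cross_moment_Suc:
  assumes "1 \<le> s"
  shows "expectation (\<lambda>\<omega>. h t \<omega> * h (t + int (Suc s)) \<omega> * eta t \<omega>)
     = \<mu> * k * (\<mu> / (1 - C1)) + C1 * expectation (\<lambda>\<omega>. h t \<omega> * h (t + int s) \<omega> * eta t \<omega>)"
proof -
  define v where "v = t + int s"
  have past: "at_times {..<t} \<subseteq> at_times {..<v}" "Inr t \<in> at_times {..<v}"
    using assms by (auto simp: v_def at_times_def intro!: at_times_mono)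
  define F where "F z = h_series z t * h_series z v * z (Inr t)" for z
  have F_measurable: "F \<in> borel_measurable (PiM (at_times {..<v}) (\<lambda>_. borel))"
    using h_series_measurable[OF past(1)] h_series_measurable[OF order_refl] past(2)
    unfolding F_def by measurable
  have W_eq: "AE \<omega> in M. h t \<omega> * h v \<omega> * eta t \<omega> = F (restrict (noise \<omega>) (at_times {..<v}))"
    using h_eq_h_series_restrict[OF past(1)] h_eq_h_series_restrict[OF order_refl, of v]
    by eventually_elim (use past(2) in \<open>simp add: F_def noise_def\<close>)
  note product = X_indep_past_expectation_mult[OF F_measurable W_eq integrable_h_h_eta]
  have "AE \<omega> in M. h t \<omega> * h (t + int (Suc s)) \<omega> * eta t \<omega>
      = \<mu> * (eta t \<omega> * h t \<omega>) + h t \<omega> * h v \<omega> * eta t \<omega> * X v \<omega>"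
    using h_rec_at[of "v + 1"] by eventually_elim (simp add: v_def algebra_simps)
  then have "expectation (\<lambda>\<omega>. h t \<omega> * h (t + int (Suc s)) \<omega> * eta t \<omega>)
      = expectation (\<lambda>\<omega>. \<mu> * (eta t \<omega> * h t \<omega>) + h t \<omega> * h v \<omega> * eta t \<omega> * X v \<omega>)"
    by (rule integral_cong_AE[rotated 2]) measurable
  also have "\<dots> = \<mu> * k * (\<mu> / (1 - C1)) + C1 * expectation (\<lambda>\<omega>. h t \<omega> * h v \<omega> * eta t \<omega>)"
    using eta_mult_h product by simp
  finally show ?thesis by (simp add: v_def)
qed

lemma cross_moment:
  assumes "1 \<le> s"
  shows "expectation (\<lambda>\<omega>. h t \<omega> * h (t + int s) \<omega> * eta t \<omega>)
     = cross_moment_formula \<mu> k C1 C2 (\<alpha>1 * sqrt (2 / pi) + \<beta>1 * (1 + k) + \<gamma>1) s"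
  using assms
proof (induction s rule: nat_induct_at_least)
  case base
  then show ?case
    using cross_moment_1 cross_moment_formula_1 C2_less_C1 C1_less_1 by simp
next
  case (Suc s)
  obtain m where m: "s = Suc m" using Suc.hyps by (cases s) auto
  have "expectation (\<lambda>\<omega>. h t \<omega> * h (t + int (Suc s)) \<omega> * eta t \<omega>)
      = \<mu> * k * (\<mu> / (1 - C1)) + C1 * expectation (\<lambda>\<omega>. h t \<omega> * h (t + int s) \<omega> * eta t \<omega>)"
    using cross_moment_Suc[OF Suc.hyps] .
  also have "\<dots> = cross_moment_formula \<mu> k C1 C2 (\<alpha>1 * sqrt (2 / pi) + \<beta>1 * (1 + k) + \<gamma>1) (Suc s)"
    unfolding Suc.IH using cross_moment_formula_Suc C2_less_C1 C1_less_1 by (simp add: m)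
  finally show ?case .
qed

end

theorem lemma1:
  fixes M :: "'a measure"
    and h eps eta :: "int \<Rightarrow> 'a \<Rightarrow> real"
    and \<mu> \<alpha>1 \<beta>1 \<gamma>1 k C1 C2 :: real
  assumes "prob_space M"
    and "\<mu> > 0" "\<alpha>1 > 0" "\<beta>1 > 0" "\<gamma>1 > 0" "k > 0"
    and meas_h: "\<And>t. h t \<in> borel_measurable M"
    and rec: "\<And>t \<omega>. \<omega> \<in> space M \<Longrightarrow>
        h t \<omega> = \<mu> + \<alpha>1 * \<bar>h (t - 1) \<omega> * eps (t - 1) \<omega>\<bar>
                 + \<beta>1 * (h (t - 1) \<omega> * eta (t - 1) \<omega>) + \<gamma>1 * h (t - 1) \<omega>"
    and eps_distr: "\<And>t. distributed M lborel (eps t) std_normal_density"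
    and eta_distr: "\<And>t. distributed M lborel (eta t) (gamma_density k)"
    and indep_noise: "prob_space.indep_vars M (\<lambda>_. borel)
        (\<lambda>i. case i of Inl t \<Rightarrow> eps t | Inr t \<Rightarrow> eta t) UNIV"
    and indep_past: "\<And>t. prob_space.indep_set M
        (sets (vimage_algebra (space M) (\<lambda>\<omega>. (eps t \<omega>, eta t \<omega>)) (borel \<Otimes>\<^sub>M borel)))
        (sets (vimage_algebra (space M) (\<lambda>\<omega>. \<lambda>s\<in>{..t}. h s \<omega>) (PiM {..t} (\<lambda>_. borel))))"
    and finite_var: "\<And>t. integrable M (\<lambda>\<omega>. (h t \<omega>)\<^sup>2)"
    and bounded_var: "\<exists>B. \<forall>t. prob_space.expectation M (\<lambda>\<omega>. (h t \<omega>)\<^sup>2) \<le> B"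
    and C1_def: "\<And>t. prob_space.expectation M
        (\<lambda>\<omega>. \<alpha>1 * \<bar>eps t \<omega>\<bar> + \<beta>1 * eta t \<omega> + \<gamma>1) = C1"
    and C2_def: "\<And>t. prob_space.expectation M
        (\<lambda>\<omega>. (\<alpha>1 * \<bar>eps t \<omega>\<bar> + \<beta>1 * eta t \<omega> + \<gamma>1)\<^sup>2) = C2"
    and "C2 < C1" "C1 < 1"
  shows "(\<forall>t. prob_space.expectation M
            (\<lambda>\<omega>. eta t \<omega> * (\<alpha>1 * \<bar>eps t \<omega>\<bar> + \<beta>1 * eta t \<omega> + \<gamma>1))
          = \<alpha>1 * sqrt (2 / pi) * k + \<beta>1 * (k + k\<^sup>2) + \<gamma>1 * k)
       \<and> (\<forall>t. \<forall>s::nat. s \<ge> 1 \<longrightarrow>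
          prob_space.expectation M (\<lambda>\<omega>. h t \<omega> * h (t + int s) \<omega> * eta t \<omega>)
          = \<mu>\<^sup>2 * k / (C1 - 1) *
              (- (C1 ^ s - 1) / (C1 - 1)
               + (C1 ^ s + C1 ^ (s - 1)) / (C2 - 1)
                 * (\<alpha>1 * sqrt (2 / pi) + \<beta>1 * (1 + k) + \<gamma>1)))"
proof -
  interpret int_garch M h eps eta \<mu> \<alpha>1 \<beta>1 \<gamma>1 k C1 C2
    by (intro int_garch.intro int_garch_axioms.intro) (fact assms)+
  show ?thesis
    using eta_mult_X(2) cross_moment unfolding X_def cross_moment_formula_def by blast
qed

end
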